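(* Let $f:X\to X$ be a continuous map on a metric space $(X,d)$. The following are equivalent: (i) $\operatorname{Per}(\overline f)$ is dense in $(\mathcal{K}(X),d_H)$; (ii) $\operatorname{Per}(\hat f)$ is dense in $\mathcal{F}_\infty(X)$; (iii) $\operatorname{Per}(\hat f)$ is dense in $\mathcal{F}_0(X)$; (iv) $\operatorname{Per}(\hat f)$ is dense in $\mathcal{F}_S(X)$; (v) $\operatorname{Per}(\hat f)$ is dense in $\mathcal{F}_E(X)$.
   Context: For a map $g:Y\to Y$, $\operatorname{Per}(g)=\{y\in Y:g^p(y)=y$ for some $p\in\mathbb{N}\}$ is the set of periodic points. $\mathbb{I}=[0,1]$. Fuzzy setting: for $u:X\to\mathbb{I}$, $u_\alpha=\{x:u(x)\ge\alpha\}$ ($\alpha\in]0,1]$), $u_0=\overline{\{x:u(x)>0\}}$. $\mathcal{F}(X)$: upper-semicontinuous $u:X\to\mathbb{I}$ with $u_0$ compact and $u_1\ne\varnothing$. $\mathcal{K}(X)$: non-empty compact subsets with Hausdorff metric $d_H(A,B)=\max\{\sup_{a\in A}d(a,B),\sup_{b\in B}d(b,A)\}$; $\overline f(K)=f(K)$. Zadeh extension: $\hat f(u)(x)=\sup\{u(y):f(y)=x\}$ (and $0$ if $f^{-1}(\{x\})=\varnothing$). Metrics on $\mathcal{F}(X)$: $d_\infty(u,v)=\sup_{\alpha\in\mathbb{I}}d_H(u_\alpha,v_\alpha)$; $d_0(u,v)=\inf\{\varepsilon>0:\exists\xi\in\mathcal{T},\ \sup_\alpha|\xi(\alpha)-\alpha|\le\varepsilon,\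 d_\infty(u,\xi\circ v)\le\varepsilon\}$ with $\mathcal{T}$ the strictly increasing homeomorphisms of $\mathbb{I}$; with $\overline d((x,\alpha),(y,\beta))=\max\{d(x,y),|\alpha-\beta|\}$, $\operatorname{end}(u)=\{(x,\alpha):u(x)\ge\alpha\}$, $\operatorname{send}(u)=\operatorname{end}(u)\cap(u_0\times\mathbb{I})$, $d_E$ and $d_S$ are the $\overline d$-Hausdorff distances of endographs and sendographs respectively. $\mathcal{F}_\rho(X)$ denotes $(\mathcal{F}(X),\rho)$. *)

theory Defs
  imports "HOL-Analysis.Analysis"
begin

definition Per :: "('b \<Rightarrow> 'b) \<Rightarrow> 'b set \<Rightarrow> 'b set" where
  "Per g S = {y \<in> S. \<exists>p::nat. p > 0 \<and> (g ^^ p) y = y}"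

definition dense_wrt :: "('b \<Rightarrow> 'b \<Rightarrow> real) \<Rightarrow> 'b set \<Rightarrow> 'b set \<Rightarrow> bool" where
  "dense_wrt rho S A \<longleftrightarrow> A \<subseteq> S \<and> (\<forall>u\<in>S. \<forall>e>0. \<exists>v\<in>A. rho u v < e)"

definition hdist :: "('b \<Rightarrow> 'b \<Rightarrow> real) \<Rightarrow> 'b set \<Rightarrow> 'b set \<Rightarrow> real" where
  "hdist D A B = max (SUP a\<in>A. INF b\<in>B. D a b) (SUP b\<in>B. INF a\<in>A. D a b)"

definition dH :: "'a::metric_space set \<Rightarrow> 'a set \<Rightarrow> real" where
  "dH = hdist dist"

definition KX :: "'a::metric_space set set" where
  "KX = {K. K \<noteq> {} \<and> compact K}"

definition fbar :: "('a \<Rightarrow> 'a) \<Rightarrow> 'a set \<Rightarrow> 'a set" where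
  "fbar f K = f ` K"

definition cut :: "('a::metric_space \<Rightarrow> real) \<Rightarrow> real \<Rightarrow> 'a set" where
  "cut u \<alpha> = (if \<alpha> = 0 then closure {x. u x > 0} else {x. u x \<ge> \<alpha>})"

definition upper_semicont :: "('a::metric_space \<Rightarrow> real) \<Rightarrow> bool" where
  "upper_semicont u \<longleftrightarrow> (\<forall>a. open {x. u x < a})"

definition FX :: "('a::metric_space \<Rightarrow> real) set" where
  "FX = {u. (\<forall>x. 0 \<le> u x \<and> u x \<le> 1) \<and> upper_semicont u \<and> compact (cut u 0) \<and> cut u 1 \<noteq> {}}"

definition zadeh :: "('a \<Rightarrow> 'a) \<Rightarrow> ('a \<Rightarrow> real) \<Rightarrow> ('a \<Rightarrow> real)" where
  "zadeh f u x = (if f -` {x} = {} then 0 else (SUP y\<in>f -` {x}. u y))"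

definition d_inf :: "('a::metric_space \<Rightarrow> real) \<Rightarrow> ('a \<Rightarrow> real) \<Rightarrow> real" where
  "d_inf u v = (SUP \<alpha>\<in>{0..1}. dH (cut u \<alpha>) (cut v \<alpha>))"

definition Tset :: "(real \<Rightarrow> real) set" where
  "Tset = {\<xi>. strict_mono_on {0..1} \<xi> \<and> continuous_on {0..1} \<xi> \<and> \<xi> ` {0..1} = {0..1}}"

definition d_0 :: "('a::metric_space \<Rightarrow> real) \<Rightarrow> ('a \<Rightarrow> real) \<Rightarrow> real" where
  "d_0 u v = Inf {\<epsilon>. \<epsilon> > 0 \<and> (\<exists>\<xi>\<in>Tset. (SUP \<alpha>\<in>{0..1}. \<bar>\<xi> \<alpha> - \<alpha>\<bar>) \<le> \<epsilon> \<and> d_inf u (\<xi> \<circ> v) \<le> \<epsilon>)}"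

definition dbar :: "('a::metric_space \<times> real) \<Rightarrow> ('a \<times> real) \<Rightarrow> real" where
  "dbar p q = max (dist (fst p) (fst q)) \<bar>snd p - snd q\<bar>"

definition endo :: "('a::metric_space \<Rightarrow> real) \<Rightarrow> ('a \<times> real) set" where
  "endo u = {(x, \<alpha>). \<alpha> \<in> {0..1} \<and> u x \<ge> \<alpha>}"

definition sendo :: "('a::metric_space \<Rightarrow> real) \<Rightarrow> ('a \<times> real) set" where
  "sendo u = endo u \<inter> (cut u 0 \<times> {0..1})"

definition d_E :: "('a::metric_space \<Rightarrow> real) \<Rightarrow> ('a \<Rightarrow> real) \<Rightarrow> real" where
  "d_E u v = hdist dbar (endo u) (endo v)"

definition d_S :: "('a::metric_space \<Rightarrow> real) \<Rightarrow> ('a \<Rightarrow> real) \<Rightarrow> real" where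
  "d_S u v = hdist dbar (sendo u) (sendo v)"

end

(* Given u in F(X) and e > 0, cover cut u 0 by finitely many balls B(x, e), let t x be the
   maximum of u on the closed ball, pick a periodic compact set P x close to {x} and let v take
   at y the largest t x with y in P x (and 0 if there is none). The Zadeh extension moves every
   P x by f, so v is periodic with the product of the periods of the P x, and each alpha-cut of v
   is 3e-close to the alpha-cut of u; closeness of all cuts bounds d_inf, d_S and d_E, and d_0 is
   at most d_inf.
   Conversely, for alpha > 0 the alpha-cut of the Zadeh extension is the image of the alpha-cut,
   so the cuts of a periodic fuzzy set are periodic compact sets. If v is d_0-close to the
   indicator of K, its 1-cut is d_H-close to K, because the reparametrisations of the levels fix
   0 and 1; if v is d_S- or d_E-close to it, so is its 1/2-cut. *)

theory Submission
  imports Defs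
begin

section \<open>Hausdorff distance\<close>

lemma INF_le_if_nonneg:
  fixes D :: "'a \<Rightarrow> real"
  assumes "\<And>b. 0 \<le> D b" "b \<in> B" "D b \<le> c"
  shows "(INF b\<in>B. D b) \<le> c"
proof -
  have "bdd_below (D ` B)" using assms(1) by (intro bdd_belowI2[where m=0])
  then show ?thesis using assms(2,3) by (rule cINF_lower2)
qed

lemma SUP_INF_le:
  fixes D :: "'a \<Rightarrow> 'b \<Rightarrow> real"
  assumes "A \<noteq> {}" "\<And>a b. 0 \<le> D a b" "\<forall>a\<in>A. \<exists>b\<in>B. D a b \<le> c"
  shows "(SUP a\<in>A. INF b\<in>B. D a b) \<le> c"
proof (rule cSUP_least[OF assms(1)])
  fix a assume "a \<in> A"
  then obtain b where "b \<in> B" "D a b \<le> c" using assms(3) by blast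
  then show "(INF b\<in>B. D a b) \<le> c" by (rule INF_le_if_nonneg[of "D a", OF assms(2)])
qed

lemma SUP_INF_less_imp:
  fixes D :: "'a \<Rightarrow> 'b \<Rightarrow> real"
  assumes "B \<noteq> {}" "\<And>a b. 0 \<le> D a b" "\<forall>a\<in>A. \<exists>b\<in>B. D a b \<le> M"
    and "(SUP a\<in>A. INF b\<in>B. D a b) < c"
  shows "\<forall>a\<in>A. \<exists>b\<in>B. D a b < c"
proof
  fix a assume "a \<in> A"
  have "(INF b\<in>B. D a' b) \<le> M" if "a' \<in> A" for a'
  proof -
    obtain b where "b \<in> B" "D a' b \<le> M" using assms(3) \<open>a' \<in> A\<close> by blast
    then show ?thesis by (rule INF_le_if_nonneg[of "D a'", OF assms(2)])
  qed
  then have "bdd_above ((\<lambda>a. INF b\<in>B. D a b) ` A)" by (intro bdd_aboveI2[where M=M])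
  then have "(INF b\<in>B. D a b) < c"
    using cSUP_upper[OF \<open>a \<in> A\<close>] assms(4) by fastforce
  moreover have "bdd_below (D a ` B)" using assms(2) by (intro bdd_belowI2[where m=0])
  ultimately show "\<exists>b\<in>B. D a b < c" using cINF_less_iff[OF assms(1)] by blast
qed

lemma hdist_leI:
  assumes "A \<noteq> {}" "B \<noteq> {}" "\<And>a b. 0 \<le> D a b"
    and "\<forall>a\<in>A. \<exists>b\<in>B. D a b \<le> c" "\<forall>b\<in>B. \<exists>a\<in>A. D a b \<le> c"
  shows "hdist D A B \<le> c"
  unfolding hdist_def using assms SUP_INF_le[of A D B c] SUP_INF_le[of B "\<lambda>b a. D a b" A c]
  by simp

(* The bound M only makes the suprema in hdist suprema of bounded sets. *)
lemma hdist_less_imp_close: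
  assumes "A \<noteq> {}" "B \<noteq> {}" "\<And>a b. 0 \<le> D a b"
    and "\<forall>a\<in>A. \<exists>b\<in>B. D a b \<le> M" "\<forall>b\<in>B. \<exists>a\<in>A. D a b \<le> M"
    and "hdist D A B < c"
  shows "\<forall>a\<in>A. \<exists>b\<in>B. D a b < c" "\<forall>b\<in>B. \<exists>a\<in>A. D a b < c"
  using assms SUP_INF_less_imp[of B D A M c] SUP_INF_less_imp[of A "\<lambda>b a. D a b" B M c]
  unfolding hdist_def by simp_all

lemma dist_le_dH_singleton:
  assumes "bounded P" "y \<in> P"
  shows "dist x y \<le> dH {x} P"
proof -
  obtain M where "\<forall>y\<in>P. dist x y \<le> M" using assms(1) bounded_any_center by blast
  then have "bdd_above (dist x ` P)" by (intro bdd_aboveI2[where M=M]) blast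
  then have "dist x y \<le> (SUP b\<in>P. INF a\<in>{x}. dist a b)"
    using cSUP_upper[OF assms(2)] by simp
  then show ?thesis unfolding dH_def hdist_def by simp
qed

section \<open>Cuts of fuzzy sets\<close>

lemma cut_superlevel: "0 < a \<Longrightarrow> cut u a = {x. a \<le> u x}"
  by (simp add: cut_def)

lemma in_cutI: "0 < u x \<Longrightarrow> a \<le> u x \<Longrightarrow> x \<in> cut u a"
  by (auto simp: cut_def intro: closure_subset[THEN subsetD])

lemma cut_subset_cut0:
  assumes "0 \<le> a"
  shows "cut u a \<subseteq> cut u 0"
proof
  fix x assume "x \<in> cut u a"
  then show "x \<in> cut u 0"
  proof (cases "a = 0")
    case False
    then have "a \<le> u x" "0 < a" using \<open>x \<in> cut u a\<close> assms by (simp_all add: cut_superlevel)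
    then show ?thesis by (intro in_cutI) simp_all
  qed simp
qed

lemma cut1_subset_cut:
  assumes "a \<le> 1"
  shows "cut u 1 \<subseteq> cut u a"
proof
  fix x assume "x \<in> cut u 1"
  then have "1 \<le> u x" by (simp add: cut_superlevel)
  then show "x \<in> cut u a" using assms by (intro in_cutI) simp_all
qed

lemma cut_approx_by_positive:
  assumes "0 \<le> a" "x \<in> cut u a" "0 < e"
  obtains z where "0 < u z" "a \<le> u z" "dist x z < e"
proof (cases "a = 0")
  case True
  then have "x \<in> closure {x. 0 < u x}" using assms(2) by (simp add: cut_def)
  then obtain z where "z \<in> {x. 0 < u x}" "dist z x < e"
    using assms(3) unfolding closure_approachable by blast
  then show ?thesis using True by (intro that[of z]) (simp_all add: dist_commute)
next
  case False
  then have "a \<le> u x" using assms(2) by (simp add: cut_def)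
  then show ?thesis using False assms(1,3) by (intro that[of x]) simp_all
qed

lemma upper_semicont_closed_superlevel:
  assumes "upper_semicont u"
  shows "closed {x. a \<le> u x}"
proof -
  have "- {x. a \<le> u x} = {x. u x < a}" by auto
  then show ?thesis using assms unfolding upper_semicont_def closed_def by simp
qed

lemma upper_semicont_if_closed_superlevels:
  assumes "\<And>x. 0 \<le> u x" "\<And>a. 0 < a \<Longrightarrow> closed {x. a \<le> u x}"
  shows "upper_semicont u"
  unfolding upper_semicont_def
proof
  fix a :: real
  show "open {x. u x < a}"
  proof (cases "0 < a")
    case True
    have "{x. u x < a} = - {x. a \<le> u x}" by auto
    then show ?thesis using assms(2)[OF True] by (simp add: open_Compl)
  next
    case False
    then have "\<not> u x < a" for x using assms(1)[of x] by linarith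
    then have "{x. u x < a} = {}" by blast
    then show ?thesis by simp
  qed
qed

lemma upper_semicont_attains_max:
  assumes "upper_semicont u" "compact C" "C \<noteq> {}"
  obtains x where "x \<in> C" "\<And>y. y \<in> C \<Longrightarrow> u y \<le> u x"
proof (rule ccontr)
  assume no_max: "\<not> thesis"
  note is_max = that
  have "\<exists>c\<in>C. u x < u c" if "x \<in> C" for x
    using is_max no_max \<open>x \<in> C\<close> by (meson not_le)
  then have cover: "C \<subseteq> (\<Union>c\<in>C. {x. u x < u c})" by blast
  have "open {x. u x < u c}" for c using assms(1) by (simp add: upper_semicont_def)
  then obtain D where D: "D \<subseteq> C" "finite D" "C \<subseteq> (\<Union>c\<in>D. {x. u x < u c})"
    using compactE_image[OF assms(2) _ cover] by metis
  then have "D \<noteq> {}" using assms(3) by auto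
  then have "Max (u ` D) \<in> u ` D" using D(2) by simp
  then obtain d where d: "d \<in> D" "u d = Max (u ` D)" by (metis imageE)
  then have "d \<in> (\<Union>c\<in>D. {x. u x < u c})" using D(1,3) by blast
  then obtain c where "c \<in> D" "u d < u c" by blast
  moreover have "u c \<le> u d" using d D(2) \<open>c \<in> D\<close> by simp
  ultimately show False by simp
qed

lemma FX_nonneg: "u \<in> FX \<Longrightarrow> 0 \<le> u x"
  and FX_le_1: "u \<in> FX \<Longrightarrow> u x \<le> 1"
  and FX_upper_semicont: "u \<in> FX \<Longrightarrow> upper_semicont u"
  by (simp_all add: FX_def)

lemma FX_compact_cut:
  assumes "u \<in> FX" "0 \<le> a"
  shows "compact (cut u a)"
proof (cases "a = 0")
  case True
  then show ?thesis using assms(1) by (simp add: FX_def)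
next
  case False
  then have "cut u a = cut u 0 \<inter> {x. a \<le> u x}"
    using cut_subset_cut0[OF assms(2)] assms(2) by (auto simp: cut_superlevel)
  then show ?thesis
    using assms(1) by (simp add: FX_def compact_Int_closed upper_semicont_closed_superlevel)
qed

lemma FX_cut_nonempty: "u \<in> FX \<Longrightarrow> a \<le> 1 \<Longrightarrow> cut u a \<noteq> {}"
  using cut1_subset_cut[of a u] by (auto simp: FX_def)

lemma FXI:
  assumes "\<And>x. 0 \<le> u x" "\<And>x. u x \<le> 1" "\<And>a. 0 < a \<Longrightarrow> closed {x. a \<le> u x}"
    and "compact C" "{x. 0 < u x} \<subseteq> C" "1 \<le> u x"
  shows "u \<in> FX"
proof -
  have "cut u 0 \<subseteq> C"
    using assms(4,5) by (simp add: cut_def closure_minimal compact_imp_closed)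
  then have "compact (cut u 0)"
    using compact_Int_closed[OF assms(4), of "cut u 0"] by (simp add: cut_def Int_absorb1)
  moreover have "x \<in> cut u 1" using assms(6) by (simp add: cut_superlevel)
  ultimately show ?thesis
    using assms(1-3) upper_semicont_if_closed_superlevels[of u] by (auto simp: FX_def)
qed

lemma cut_indicator:
  assumes "closed K" "0 \<le> a" "a \<le> 1"
  shows "cut (indicator K) a = K"
proof (cases "a = 0")
  case True
  have "{x. 0 < (indicator K x :: real)} = K" by (auto simp: indicator_def)
  then show ?thesis using True assms(1) by (simp add: cut_def)
next
  case False
  then have "{x. a \<le> (indicator K x :: real)} = K" using assms(2,3) by (auto simp: indicator_def)
  then show ?thesis using False assms(2) by (simp add: cut_superlevel)
qed

lemma indicator_FX:
  assumes "K \<in> KX"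
  shows "indicator K \<in> FX"
proof -
  have K: "compact K" "K \<noteq> {}" using assms by (auto simp: KX_def)
  then obtain x1 where "x1 \<in> K" by blast
  have "closed {x. a \<le> (indicator K x :: real)}" if "0 < a" for a
  proof (cases "a \<le> 1")
    case True
    then have "{x. a \<le> (indicator K x :: real)} = K" using that by (auto simp: indicator_def)
    then show ?thesis using K(1) by (simp add: compact_imp_closed)
  next
    case False
    then have "{x. a \<le> (indicator K x :: real)} = {}" by (auto simp: indicator_def)
    then show ?thesis by simp
  qed
  moreover have "{x. 0 < (indicator K x :: real)} \<subseteq> K" by (auto simp: indicator_def)
  ultimately show ?thesis
    using K(1) \<open>x1 \<in> K\<close> by (intro FXI[where C=K and x=x1]) auto
qed

section \<open>The Zadeh extension\<close>

(* Continuity of f enters only here: it makes the fibre closed, so the upper semicontinuous u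
   attains its supremum on the compact part of the fibre inside cut u 0. *)
lemma zadeh_attains_value:
  assumes "continuous_on UNIV f" "u \<in> FX" "0 < zadeh f u y"
  obtains x where "f x = y" "zadeh f u y = u x"
proof -
  have fiber: "f -` {y} \<noteq> {}" using assms(3) by (auto simp: zadeh_def)
  then have zadeh: "zadeh f u y = (SUP x\<in>f -` {y}. u x)" by (simp add: zadeh_def)
  define C where "C = f -` {y} \<inter> cut u 0"
  have "compact C"
    unfolding C_def using assms(1,2)
    by (intro closed_Int_compact closed_vimage FX_compact_cut) auto
  have nonpos_outside: "u x \<le> 0" if "x \<notin> cut u 0" for x
    using in_cutI[of u x 0] that by linarith
  show ?thesis
  proof (cases "C = {}")
    case True
    then have "u x \<le> 0" if "x \<in> f -` {y}" for x using that nonpos_outside by (auto simp: C_def)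
    then have "zadeh f u y \<le> 0" unfolding zadeh by (rule cSUP_least[OF fiber])
    then show ?thesis using assms(3) by simp
  next
    case False
    then obtain x0 where x0: "x0 \<in> C" "\<And>x. x \<in> C \<Longrightarrow> u x \<le> u x0"
      using upper_semicont_attains_max[OF FX_upper_semicont[OF assms(2)] \<open>compact C\<close>] by blast
    have "u x \<le> u x0" if "x \<in> f -` {y}" for x
    proof (cases "x \<in> cut u 0")
      case True
      then show ?thesis using that x0(2) by (simp add: C_def)
    next
      case False
      then show ?thesis using nonpos_outside FX_nonneg[OF assms(2), of x0] by fastforce
    qed
    then have "zadeh f u y \<le> u x0" unfolding zadeh by (rule cSUP_least[OF fiber])
    moreover have "u x0 \<le> zadeh f u y"
      unfolding zadeh using x0(1) FX_le_1[OF assms(2)]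
      by (intro cSUP_upper bdd_aboveI2[where M=1]) (auto simp: C_def)
    ultimately show ?thesis using x0(1) by (intro that[of x0]) (auto simp: C_def)
  qed
qed

lemma zadeh_ge_iff:
  assumes "continuous_on UNIV f" "u \<in> FX" "0 < a"
  shows "a \<le> zadeh f u y \<longleftrightarrow> (\<exists>x. f x = y \<and> a \<le> u x)"
proof
  assume "a \<le> zadeh f u y"
  then obtain x where "f x = y" "zadeh f u y = u x"
    using zadeh_attains_value[OF assms(1,2)] assms(3) by (metis less_le_trans)
  then show "\<exists>x. f x = y \<and> a \<le> u x" using \<open>a \<le> zadeh f u y\<close> by auto
next
  assume "\<exists>x. f x = y \<and> a \<le> u x"
  then obtain x where x: "x \<in> f -` {y}" "a \<le> u x" by auto
  have "u x \<le> (SUP x\<in>f -` {y}. u x)"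
    using x(1) FX_le_1[OF assms(2)] by (intro cSUP_upper bdd_aboveI2[where M=1]) auto
  then show "a \<le> zadeh f u y" using x by (auto simp: zadeh_def)
qed

lemma cut_zadeh:
  assumes "continuous_on UNIV f" "u \<in> FX" "0 < a"
  shows "cut (zadeh f u) a = fbar f (cut u a)"
  using zadeh_ge_iff[OF assms] assms(3) by (auto simp: cut_superlevel fbar_def)

lemma zadeh_nonneg:
  assumes "u \<in> FX"
  shows "0 \<le> zadeh f u y"
proof (cases "f -` {y} = {}")
  case False
  then obtain x where "x \<in> f -` {y}" by blast
  then have "u x \<le> (SUP x\<in>f -` {y}. u x)"
    using FX_le_1[OF assms] by (intro cSUP_upper bdd_aboveI2[where M=1]) auto
  then show ?thesis using False FX_nonneg[OF assms, of x] by (simp add: zadeh_def)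
qed (simp add: zadeh_def)

lemma zadeh_FX:
  assumes "continuous_on UNIV f" "u \<in> FX"
  shows "zadeh f u \<in> FX"
proof -
  have ge_iff: "a \<le> zadeh f u y \<longleftrightarrow> (\<exists>x. f x = y \<and> a \<le> u x)" if "0 < a" for a y
    using zadeh_ge_iff[OF assms that] .
  have image_compact: "compact (f ` cut u a)" if "0 \<le> a" for a
    using assms FX_compact_cut[OF assms(2) that]
    by (intro compact_continuous_image) (auto intro: continuous_on_subset)
  have "zadeh f u y \<le> 1" for y
  proof (rule ccontr)
    assume "\<not> zadeh f u y \<le> 1"
    then obtain x where "zadeh f u y \<le> u x" using ge_iff[of "zadeh f u y" y] by auto
    then show False using \<open>\<not> zadeh f u y \<le> 1\<close> FX_le_1[OF assms(2), of x] by linarith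
  qed
  moreover have "closed {y. a \<le> zadeh f u y}" if "0 < a" for a
  proof -
    have "{y. a \<le> zadeh f u y} = f ` cut u a" using ge_iff[OF that] that by (auto simp: cut_superlevel)
    then show ?thesis using image_compact[of a] that by (simp add: compact_imp_closed)
  qed
  moreover have "{y. 0 < zadeh f u y} \<subseteq> f ` cut u 0"
  proof
    fix y assume "y \<in> {y. 0 < zadeh f u y}"
    then have pos: "0 < zadeh f u y" by simp
    then obtain x where "f x = y" "zadeh f u y \<le> u x" using ge_iff[of "zadeh f u y" y] by auto
    then have "x \<in> cut u 0" using pos by (intro in_cutI) simp_all
    then show "y \<in> f ` cut u 0" using \<open>f x = y\<close> by blast
  qed
  moreover obtain x1 where "x1 \<in> cut u 1" using FX_cut_nonempty[OF assms(2)] by blast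
  then have "1 \<le> zadeh f u (f x1)" using ge_iff[of 1] by (auto simp: cut_superlevel)
  ultimately show ?thesis
    using zadeh_nonneg[OF assms(2)] image_compact[of 0]
    by (intro FXI[where C="f ` cut u 0" and x="f x1"]) auto
qed

lemma cut_funpow_zadeh:
  assumes "continuous_on UNIV f" "u \<in> FX" "0 < a"
  shows "cut ((zadeh f ^^ n) u) a = (fbar f ^^ n) (cut u a)"
  using assms(2)
proof (induction n arbitrary: u)
  case (Suc n)
  have "cut ((zadeh f ^^ Suc n) u) a = cut ((zadeh f ^^ n) (zadeh f u)) a"
    by (simp only: funpow_Suc_right comp_apply)
  also have "\<dots> = (fbar f ^^ n) (fbar f (cut u a))"
    using Suc zadeh_FX[OF assms(1)] cut_zadeh[OF assms(1) _ assms(3)] by simp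
  finally show ?case by (simp only: funpow_Suc_right comp_apply)
qed simp

lemma cut_Per_zadeh:
  assumes "continuous_on UNIV f" "v \<in> Per (zadeh f) FX" "0 < a" "a \<le> 1"
  shows "cut v a \<in> Per (fbar f) KX"
proof -
  obtain p where p: "v \<in> FX" "0 < p" "(zadeh f ^^ p) v = v" using assms(2) by (auto simp: Per_def)
  then have "(fbar f ^^ p) (cut v a) = cut v a"
    using cut_funpow_zadeh[OF assms(1) p(1) assms(3), of p] by simp
  moreover have "cut v a \<in> KX"
    using FX_cut_nonempty[OF p(1) assms(4)] FX_compact_cut[OF p(1)] assms(3) by (simp add: KX_def)
  ultimately show ?thesis using p(2) by (auto simp: Per_def)
qed

section \<open>The metrics on fuzzy sets\<close>

lemma Tset_endpoints:
  assumes "\<xi> \<in> Tset"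
  shows "\<xi> 0 = 0" "\<xi> 1 = 1"
proof -
  have mono: "strict_mono_on {0..1} \<xi>" and onto: "\<xi> ` {0..1} = {0..1}"
    using assms by (auto simp: Tset_def)
  obtain a0 where a0: "a0 \<in> {0..1}" "\<xi> a0 = 0" using onto by (metis atLeastAtMost_iff imageE order_refl zero_le_one)
  obtain a1 where a1: "a1 \<in> {0..1}" "\<xi> a1 = 1" using onto by (metis atLeastAtMost_iff imageE order_refl zero_le_one)
  have "\<xi> 0 \<le> \<xi> a0" "\<xi> a1 \<le> \<xi> 1"
    using a0(1) a1(1) strict_mono_on_leD[OF mono] by auto
  moreover have "\<xi> 0 \<in> {0..1}" "\<xi> 1 \<in> {0..1}" using onto by auto
  ultimately show "\<xi> 0 = 0" "\<xi> 1 = 1" using a0(2) a1(2) by auto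
qed

lemma cut_comp_Tset:
  assumes "\<xi> \<in> Tset" "\<And>x. 0 \<le> v x" "\<And>x. v x \<le> 1"
  shows "cut (\<xi> \<circ> v) 0 = cut v 0" "cut (\<xi> \<circ> v) 1 = cut v 1"
proof -
  have mono: "strict_mono_on {0..1} \<xi>" using assms(1) by (simp add: Tset_def)
  note ends = Tset_endpoints[OF assms(1)]
  have "0 < \<xi> (v x) \<longleftrightarrow> 0 < v x" for x
    using strict_mono_onD[OF mono, of 0 "v x"] ends(1) assms(2,3)[of x] by (cases "v x = 0") auto
  then show "cut (\<xi> \<circ> v) 0 = cut v 0" by (simp add: cut_def)
  have "1 \<le> \<xi> (v x) \<longleftrightarrow> 1 \<le> v x" for x
    using strict_mono_onD[OF mono, of "v x" 1] ends(2) assms(2,3)[of x] by (cases "v x = 1") auto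
  then show "cut (\<xi> \<circ> v) 1 = cut v 1" by (simp add: cut_superlevel)
qed

lemma dH_cut_le_d_inf:
  assumes "bounded (cut u 0)" "bounded (cut w 0)" "cut u 1 \<noteq> {}" "cut w 1 \<noteq> {}"
    and "a \<in> {0..1}"
  shows "dH (cut u a) (cut w a) \<le> d_inf u w"
proof -
  obtain M where M: "\<forall>x\<in>cut u 0 \<union> cut w 0. \<forall>y\<in>cut u 0 \<union> cut w 0. dist x y \<le> M"
    using bounded_two_points assms(1,2) bounded_Un by metis
  have "dH (cut u b) (cut w b) \<le> M" if b: "b \<in> {0..1}" for b
  proof -
    have sub: "cut u b \<subseteq> cut u 0" "cut w b \<subseteq> cut w 0"
      using cut_subset_cut0[of b u] cut_subset_cut0[of b w] b by auto
    obtain p q where "p \<in> cut u b" "q \<in> cut w b"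
      using assms(3,4) cut1_subset_cut[of b u] cut1_subset_cut[of b w] b by auto
    moreover have "\<forall>x\<in>cut u b. \<exists>y\<in>cut w b. dist x y \<le> M" using M sub \<open>q \<in> cut w b\<close> by blast
    moreover have "\<forall>y\<in>cut w b. \<exists>x\<in>cut u b. dist x y \<le> M" using M sub \<open>p \<in> cut u b\<close> by blast
    ultimately show ?thesis unfolding dH_def by (intro hdist_leI) auto
  qed
  then have "bdd_above ((\<lambda>b. dH (cut u b) (cut w b)) ` {0..1})"
    by (intro bdd_aboveI2[where M=M]) auto
  then show ?thesis unfolding d_inf_def by (rule cSUP_upper[OF assms(5)])
qed

lemma id_Tset: "(\<lambda>x. x) \<in> Tset"
  by (auto simp: Tset_def intro: strict_mono_onI)

lemma dH_cut1_le_d_0: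
  assumes "K \<in> KX" "v \<in> FX"
  shows "dH K (cut v 1) \<le> d_0 (indicator K) v"
proof -
  let ?E = "{\<epsilon>. 0 < \<epsilon> \<and> (\<exists>\<xi>\<in>Tset. (SUP \<alpha>\<in>{0..1}. \<bar>\<xi> \<alpha> - \<alpha>\<bar>) \<le> \<epsilon>
      \<and> d_inf (indicator K) (\<xi> \<circ> v) \<le> \<epsilon>)}"
  have "\<bar>d_inf (indicator K) v\<bar> + 1 \<in> ?E"
    using id_Tset by (auto simp: o_def intro!: bexI[of _ "\<lambda>x. x"])
  moreover have "dH K (cut v 1) \<le> \<epsilon>" if \<epsilon>: "\<epsilon> \<in> ?E" for \<epsilon>
  proof -
    obtain \<xi> where \<xi>: "\<xi> \<in> Tset" "d_inf (indicator K) (\<xi> \<circ> v) \<le> \<epsilon>" using \<epsilon> by blast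
    have K: "compact K" "K \<noteq> {}" using assms(1) by (auto simp: KX_def)
    have cuts: "cut (\<xi> \<circ> v) 0 = cut v 0" "cut (\<xi> \<circ> v) 1 = cut v 1"
      using cut_comp_Tset[OF \<xi>(1)] FX_nonneg[OF assms(2)] FX_le_1[OF assms(2)] by auto
    have ind: "cut (indicator K) a = K" if "a \<in> {0..1}" for a
      using cut_indicator[of K a] K(1) that by (simp add: compact_imp_closed)
    have "dH (cut (indicator K) 1) (cut (\<xi> \<circ> v) 1) \<le> d_inf (indicator K) (\<xi> \<circ> v)"
      using K FX_compact_cut[OF assms(2), of 0] FX_cut_nonempty[OF assms(2), of 1]
      by (intro dH_cut_le_d_inf) (simp_all add: ind cuts compact_imp_bounded)
    then show ?thesis using \<xi>(2) by (simp add: ind cuts)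
  qed
  ultimately show ?thesis unfolding d_0_def by (intro cInf_greatest) blast+
qed

(* The maximum with 0 covers arguments outside FX, where the supremum defining d_inf is an
   unspecified value. *)
lemma d_0_le_d_inf: "d_0 u v \<le> max 0 (d_inf u v)"
proof (rule field_le_epsilon)
  fix \<delta> :: real assume "0 < \<delta>"
  let ?E = "{\<epsilon>. 0 < \<epsilon> \<and> (\<exists>\<xi>\<in>Tset. (SUP \<alpha>\<in>{0..1}. \<bar>\<xi> \<alpha> - \<alpha>\<bar>) \<le> \<epsilon> \<and> d_inf u (\<xi> \<circ> v) \<le> \<epsilon>)}"
  have "max 0 (d_inf u v) + \<delta> \<in> ?E"
    using id_Tset \<open>0 < \<delta>\<close> by (auto simp: o_def intro!: bexI[of _ "\<lambda>x. x"])
  moreover have "bdd_below ?E" by (intro bdd_belowI[where m=0]) auto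
  ultimately show "d_0 u v \<le> max 0 (d_inf u v) + \<delta>" unfolding d_0_def by (rule cInf_lower)
qed

definition levelwise_close :: "real \<Rightarrow> ('a::metric_space \<Rightarrow> real) \<Rightarrow> ('a \<Rightarrow> real) \<Rightarrow> bool" where
  "levelwise_close c u v \<longleftrightarrow> (\<forall>a\<in>{0..1}.
     (\<forall>x\<in>cut u a. \<exists>y\<in>cut v a. dist x y \<le> c) \<and> (\<forall>y\<in>cut v a. \<exists>x\<in>cut u a. dist x y \<le> c))"

lemma levelwise_close_sym: "levelwise_close c u v \<Longrightarrow> levelwise_close c v u"
  unfolding levelwise_close_def by (metis dist_commute)

lemma d_inf_le_if_levelwise_close:
  assumes "u \<in> FX" "v \<in> FX" "levelwise_close c u v"
  shows "d_inf u v \<le> c"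
  unfolding d_inf_def
proof (rule cSUP_least)
  fix a :: real assume "a \<in> {0..1}"
  then show "dH (cut u a) (cut v a) \<le> c"
    using assms FX_cut_nonempty[of u a] FX_cut_nonempty[of v a]
    unfolding dH_def levelwise_close_def by (intro hdist_leI) auto
qed simp

lemma dbar_nonneg: "0 \<le> dbar p q"
  by (simp add: dbar_def le_max_iff_disj)

lemma dbar_commute: "dbar p q = dbar q p"
  by (simp add: dbar_def dist_commute abs_minus_commute)

lemma endo_close_if_levelwise_close:
  assumes "\<And>x. 0 \<le> v x" "0 \<le> c" "levelwise_close c u v"
  shows "\<forall>p\<in>endo u. \<exists>q\<in>endo v. dbar p q \<le> c"
proof
  fix p assume "p \<in> endo u"
  then obtain x \<alpha> where p: "p = (x, \<alpha>)" "\<alpha> \<in> {0..1}" "\<alpha> \<le> u x" by (auto simp: endo_def)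
  show "\<exists>q\<in>endo v. dbar p q \<le> c"
  proof (cases "\<alpha> = 0")
    case True
    then have "(x, 0) \<in> endo v" "dbar p (x, 0) \<le> c"
      using p assms(1,2) by (auto simp: endo_def dbar_def)
    then show ?thesis by blast
  next
    case False
    then have "0 < \<alpha>" using p(2) by simp
    then have "x \<in> cut u \<alpha>" using p by (simp add: cut_superlevel)
    then obtain y where "y \<in> cut v \<alpha>" "dist x y \<le> c"
      using assms(3) p(2) unfolding levelwise_close_def by blast
    then have "(y, \<alpha>) \<in> endo v" "dbar p (y, \<alpha>) \<le> c"
      using p \<open>0 < \<alpha>\<close> by (auto simp: endo_def dbar_def cut_superlevel)
    then show ?thesis by blast
  qed
qed

lemma mem_sendo_iff:
  assumes "\<And>x. 0 \<le> u x"
  shows "(x, \<alpha>) \<in> sendo u \<longleftrightarrow> \<alpha> \<in> {0..1} \<and> x \<in> cut u \<alpha>"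
proof (cases "\<alpha> = 0")
  case True
  then show ?thesis using assms by (auto simp: sendo_def endo_def)
next
  case False
  then have "0 \<le> \<alpha> \<Longrightarrow> x \<in> cut u \<alpha> \<Longrightarrow> x \<in> cut u 0" using cut_subset_cut0[of \<alpha> u] by blast
  then show ?thesis using False by (auto simp: sendo_def endo_def cut_superlevel)
qed

lemma sendo_close_if_levelwise_close:
  assumes "\<And>x. 0 \<le> u x" "\<And>x. 0 \<le> v x" "levelwise_close c u v"
  shows "\<forall>p\<in>sendo u. \<exists>q\<in>sendo v. dbar p q \<le> c"
proof
  fix p assume "p \<in> sendo u"
  then obtain x \<alpha> where p: "p = (x, \<alpha>)" "\<alpha> \<in> {0..1}" "x \<in> cut u \<alpha>"
    using mem_sendo_iff[of u, OF assms(1)] by (cases p) auto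
  then obtain y where "y \<in> cut v \<alpha>" "dist x y \<le> c"
    using assms(3) unfolding levelwise_close_def by blast
  then have "(y, \<alpha>) \<in> sendo v" "dbar p (y, \<alpha>) \<le> c"
    using p mem_sendo_iff[of v, OF assms(2)] by (auto simp: dbar_def)
  then show "\<exists>q\<in>sendo v. dbar p q \<le> c" by blast
qed

lemma d_E_le_if_levelwise_close:
  assumes "u \<in> FX" "v \<in> FX" "0 \<le> c" "levelwise_close c u v"
  shows "d_E u v \<le> c"
  unfolding d_E_def
proof (rule hdist_leI)
  have "(x, 0) \<in> endo w" if "w \<in> FX" for x and w :: "'a \<Rightarrow> real"
    using FX_nonneg[OF that] by (simp add: endo_def)
  then show "endo u \<noteq> {}" "endo v \<noteq> {}" using assms(1,2) by blast+
  show "\<forall>p\<in>endo u. \<exists>q\<in>endo v. dbar p q \<le> c"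
    using endo_close_if_levelwise_close[of v, OF FX_nonneg[OF assms(2)] assms(3,4)] .
  show "\<forall>q\<in>endo v. \<exists>p\<in>endo u. dbar p q \<le> c"
    using endo_close_if_levelwise_close[of u, OF FX_nonneg[OF assms(1)] assms(3)
        levelwise_close_sym[OF assms(4)]]
    by (metis dbar_commute)
qed (rule dbar_nonneg)

lemma d_S_le_if_levelwise_close:
  assumes "u \<in> FX" "v \<in> FX" "levelwise_close c u v"
  shows "d_S u v \<le> c"
  unfolding d_S_def
proof (rule hdist_leI)
  show "sendo u \<noteq> {}" "sendo v \<noteq> {}"
    using mem_sendo_iff[of u, OF FX_nonneg[OF assms(1)]] mem_sendo_iff[of v, OF FX_nonneg[OF assms(2)]]
      FX_cut_nonempty[OF assms(1), of 1] FX_cut_nonempty[OF assms(2), of 1] by fastforce+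
  show "\<forall>p\<in>sendo u. \<exists>q\<in>sendo v. dbar p q \<le> c"
    using sendo_close_if_levelwise_close[of u v, OF FX_nonneg[OF assms(1)] FX_nonneg[OF assms(2)]
        assms(3)] .
  show "\<forall>q\<in>sendo v. \<exists>p\<in>sendo u. dbar p q \<le> c"
    using sendo_close_if_levelwise_close[of v u, OF FX_nonneg[OF assms(2)] FX_nonneg[OF assms(1)]
        levelwise_close_sym[OF assms(3)]]
    by (metis dbar_commute)
qed (rule dbar_nonneg)

(* A graph point of the indicator at height 1 is c-close only to graph points of v above 1/2,
   and a graph point of v at height 1/2 only to graph points of positive height, which lie over K. *)
lemma dH_cut_half_le_if_graphs_hdist_less:
  assumes "K \<in> KX" "v \<in> FX" "c \<le> 1/4"
    and "K \<times> {1} \<subseteq> A" "A \<subseteq> endo (indicator K)"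
    and "cut v (1/2) \<times> {1/2} \<subseteq> B" "B \<subseteq> endo v"
    and "\<forall>p\<in>A. \<exists>q\<in>B. dbar p q \<le> M" "\<forall>q\<in>B. \<exists>p\<in>A. dbar p q \<le> M"
    and "hdist dbar A B < c"
  shows "dH K (cut v (1/2)) \<le> c"
  unfolding dH_def
proof (rule hdist_leI)
  show "K \<noteq> {}" using assms(1) by (simp add: KX_def)
  show "cut v (1/2) \<noteq> {}" using FX_cut_nonempty[OF assms(2)] by simp
  then have "A \<noteq> {}" "B \<noteq> {}" using \<open>K \<noteq> {}\<close> assms(4,6) by blast+
  then have AB: "\<forall>p\<in>A. \<exists>q\<in>B. dbar p q < c" "\<forall>q\<in>B. \<exists>p\<in>A. dbar p q < c"
    using hdist_less_imp_close[OF _ _ dbar_nonneg assms(8-10)] by blast+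
  show "\<forall>x\<in>K. \<exists>y\<in>cut v (1/2). dist x y \<le> c"
  proof
    fix x assume "x \<in> K"
    then obtain q where "q \<in> B" "dbar (x, 1) q < c" using assms(4) AB(1) by blast
    moreover obtain y \<beta> where "q = (y, \<beta>)" by fastforce
    ultimately have "dist x y < c" "1 - \<beta> < c" "\<beta> \<le> v y"
      using assms(7) by (auto simp: dbar_def endo_def)
    then show "\<exists>y\<in>cut v (1/2). dist x y \<le> c"
      using assms(3) by (intro bexI[of _ y]) (auto simp: cut_superlevel)
  qed
  show "\<forall>y\<in>cut v (1/2). \<exists>x\<in>K. dist x y \<le> c"
  proof
    fix y assume "y \<in> cut v (1/2)"
    then obtain p where "p \<in> A" "dbar p (y, 1/2) < c" using assms(6) AB(2) by blast
    moreover obtain x \<gamma> where "p = (x, \<gamma>)" by fastforce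
    ultimately have "dist x y < c" "0 < \<gamma>" "\<gamma> \<le> indicator K x"
      using assms(3,5) by (auto simp: dbar_def endo_def)
    moreover have "x \<in> K" using calculation(2,3) by (cases "x \<in> K") auto
    ultimately show "\<exists>x\<in>K. dist x y \<le> c" by (intro bexI[of _ x]) auto
  qed
qed simp

lemma endo_near_level0:
  assumes "\<And>x. 0 \<le> w x"
  shows "\<forall>p\<in>endo u. \<exists>q\<in>endo w. dbar p q \<le> 1"
proof
  fix p assume "p \<in> endo u"
  then obtain x \<alpha> where "p = (x, \<alpha>)" "\<alpha> \<in> {0..1}" by (auto simp: endo_def)
  moreover have "(x, 0) \<in> endo w" using assms by (simp add: endo_def)
  ultimately show "\<exists>q\<in>endo w. dbar p q \<le> 1" by (intro bexI[of _ "(x, 0)"]) (auto simp: dbar_def)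
qed

lemma dH_cut_half_le_d_E:
  assumes "K \<in> KX" "v \<in> FX" "c \<le> 1/4" "d_E (indicator K) v < c"
  shows "dH K (cut v (1/2)) \<le> c"
proof (rule dH_cut_half_le_if_graphs_hdist_less[OF assms(1-3), where A="endo (indicator K)" and B="endo v"])
  show "\<forall>p\<in>endo (indicator K). \<exists>q\<in>endo v. dbar p q \<le> 1"
    using endo_near_level0[where w=v] FX_nonneg[OF assms(2)] by blast
  show "\<forall>q\<in>endo v. \<exists>p\<in>endo (indicator K). dbar p q \<le> 1"
    using endo_near_level0[where w="indicator K" and u=v] by (simp add: dbar_commute)
qed (use assms(4) in \<open>auto simp: d_E_def endo_def cut_superlevel\<close>)

lemma sendo_dbar_bounded:
  assumes "u \<in> FX" "v \<in> FX"
  obtains M where "\<forall>p\<in>sendo u. \<forall>q\<in>sendo v. dbar p q \<le> M"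
proof -
  have "bounded (cut u 0 \<union> cut v 0)"
    using FX_compact_cut[OF assms(1), of 0] FX_compact_cut[OF assms(2), of 0]
    by (simp add: compact_imp_bounded)
  then obtain M where M: "\<forall>x\<in>cut u 0 \<union> cut v 0. \<forall>y\<in>cut u 0 \<union> cut v 0. dist x y \<le> M"
    unfolding bounded_two_points by blast
  have "dbar p q \<le> max M 1" if "p \<in> sendo u" "q \<in> sendo v" for p q
  proof -
    obtain x \<alpha> y \<beta> where "p = (x, \<alpha>)" "q = (y, \<beta>)" by fastforce
    then have "dist x y \<le> M" "\<bar>\<alpha> - \<beta>\<bar> \<le> 1"
      using that M by (auto simp: sendo_def)
    then show ?thesis using \<open>p = (x, \<alpha>)\<close> \<open>q = (y, \<beta>)\<close> by (auto simp: dbar_def)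
  qed
  then show ?thesis using that by blast
qed

lemma dH_cut_half_le_d_S:
  assumes "K \<in> KX" "v \<in> FX" "c \<le> 1/4" "d_S (indicator K) v < c"
  shows "dH K (cut v (1/2)) \<le> c"
proof -
  have "closed K" using assms(1) by (simp add: KX_def compact_imp_closed)
  then have K1: "K \<times> {1} \<subseteq> sendo (indicator K)"
    using mem_sendo_iff[of "indicator K"] cut_indicator[of K 1] by auto
  have v_half: "cut v (1/2) \<times> {1/2} \<subseteq> sendo v"
    using mem_sendo_iff[of v, OF FX_nonneg[OF assms(2)]] by auto
  have "K \<noteq> {}" "cut v (1/2) \<noteq> {}"
    using assms(1) FX_cut_nonempty[OF assms(2)] by (auto simp: KX_def)
  then have "sendo (indicator K) \<noteq> {}" "sendo v \<noteq> {}" using K1 v_half by blast+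
  moreover obtain M where "\<forall>p\<in>sendo (indicator K). \<forall>q\<in>sendo v. dbar p q \<le> M"
    using sendo_dbar_bounded[OF indicator_FX[OF assms(1)] assms(2)] by blast
  ultimately have "\<forall>p\<in>sendo (indicator K). \<exists>q\<in>sendo v. dbar p q \<le> M"
      "\<forall>q\<in>sendo v. \<exists>p\<in>sendo (indicator K). dbar p q \<le> M"
    by blast+
  moreover have "sendo u \<subseteq> endo u" for u :: "'a \<Rightarrow> real" by (simp add: sendo_def)
  ultimately show ?thesis
    using K1 v_half assms(4) unfolding d_S_def
    by (intro dH_cut_half_le_if_graphs_hdist_less[OF assms(1-3), where A="sendo (indicator K)"
          and B="sendo v" and M=M]) auto
qed

section \<open>Periodic step approximations\<close>

definition fuzzy_union :: "'i set \<Rightarrow> ('i \<Rightarrow> real) \<Rightarrow> ('i \<Rightarrow> 'a set) \<Rightarrow> 'a \<Rightarrow> real" where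
  "fuzzy_union I t Q y = Max (insert 0 (t ` {i\<in>I. y \<in> Q i}))"

lemma fuzzy_union_nonneg: "finite I \<Longrightarrow> 0 \<le> fuzzy_union I t Q y"
  unfolding fuzzy_union_def by (rule Max_ge) auto

lemma fuzzy_union_ge: "finite I \<Longrightarrow> i \<in> I \<Longrightarrow> y \<in> Q i \<Longrightarrow> t i \<le> fuzzy_union I t Q y"
  unfolding fuzzy_union_def by (rule Max_ge) auto

lemma fuzzy_union_cases:
  assumes "finite I"
  shows "fuzzy_union I t Q y = 0 \<or> (\<exists>i\<in>I. y \<in> Q i \<and> fuzzy_union I t Q y = t i)"
proof -
  have "fuzzy_union I t Q y \<in> insert 0 (t ` {i\<in>I. y \<in> Q i})"
    unfolding fuzzy_union_def using assms by (intro Max_in) auto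
  then show ?thesis by auto
qed

lemma fuzzy_union_mono:
  "finite I \<Longrightarrow> {i\<in>I. x \<in> Q i} \<subseteq> {i\<in>I. y \<in> R i} \<Longrightarrow> fuzzy_union I t Q x \<le> fuzzy_union I t R y"
  unfolding fuzzy_union_def by (rule Max_mono) auto

lemma fuzzy_union_ge_iff:
  assumes "finite I" "0 < a"
  shows "a \<le> fuzzy_union I t Q y \<longleftrightarrow> (\<exists>i\<in>I. y \<in> Q i \<and> a \<le> t i)"
proof
  assume "a \<le> fuzzy_union I t Q y"
  then show "\<exists>i\<in>I. y \<in> Q i \<and> a \<le> t i"
    using fuzzy_union_cases[OF assms(1), of t Q y] assms(2) by auto
next
  assume "\<exists>i\<in>I. y \<in> Q i \<and> a \<le> t i"
  then show "a \<le> fuzzy_union I t Q y" using fuzzy_union_ge[OF assms(1)] by (meson order_trans)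
qed

lemma fuzzy_union_FX:
  assumes "finite I" "\<And>i. i \<in> I \<Longrightarrow> compact (Q i)" "\<And>i. i \<in> I \<Longrightarrow> t i \<le> 1"
    and "i \<in> I" "x \<in> Q i" "1 \<le> t i"
  shows "fuzzy_union I t Q \<in> FX"
proof -
  let ?v = "fuzzy_union I t Q"
  have "?v y \<le> 1" for y using fuzzy_union_cases[OF assms(1), of t Q y] assms(3) by auto
  moreover have "closed {y. a \<le> ?v y}" if "0 < a" for a
  proof -
    have "{y. a \<le> ?v y} = (\<Union>i\<in>{i\<in>I. a \<le> t i}. Q i)"
      using fuzzy_union_ge_iff[OF assms(1) that, of t Q] by blast
    moreover have "closed (Q i)" if "i \<in> I" for i using assms(2)[OF that] by (rule compact_imp_closed)
    ultimately show ?thesis using assms(1) by (simp add: closed_UN)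
  qed
  moreover have "{y. 0 < ?v y} \<subseteq> (\<Union>i\<in>I. Q i)"
  proof
    fix y assume "y \<in> {y. 0 < ?v y}"
    then show "y \<in> (\<Union>i\<in>I. Q i)" using fuzzy_union_cases[OF assms(1), of t Q y] by auto
  qed
  moreover have "compact (\<Union>i\<in>I. Q i)" using assms(1,2) by (intro compact_UN) auto
  moreover have "1 \<le> ?v x" using fuzzy_union_ge[where t=t and Q=Q, OF assms(1,4,5)] assms(6) by linarith
  ultimately show ?thesis
    using fuzzy_union_nonneg[OF assms(1)] by (intro FXI[where C="\<Union>i\<in>I. Q i" and x=x]) auto
qed

lemma zadeh_fuzzy_union:
  assumes "finite I"
  shows "zadeh f (fuzzy_union I t Q) = fuzzy_union I t (\<lambda>i. fbar f (Q i))"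
proof
  fix y
  let ?v = "fuzzy_union I t Q" and ?w = "fuzzy_union I t (\<lambda>i. fbar f (Q i))"
  have le: "?v x \<le> ?w (f x)" for x
    using assms by (intro fuzzy_union_mono) (auto simp: fbar_def)
  show "zadeh f ?v y = ?w y"
  proof (cases "f -` {y} = {}")
    case True
    then have no_index: "{i\<in>I. y \<in> fbar f (Q i)} = {}" by (auto simp: fbar_def)
    show ?thesis using True unfolding zadeh_def fuzzy_union_def no_index by simp
  next
    case fiber: False
    have bdd: "bdd_above (?v ` f -` {y})" using le by (intro bdd_aboveI2[where M="?w y"]) auto
    have "(SUP x\<in>f -` {y}. ?v x) \<le> ?w y" using le fiber by (intro cSUP_least) auto
    moreover have "?w y \<le> (SUP x\<in>f -` {y}. ?v x)"
    proof (cases "?w y = 0")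
      case True
      obtain x where "x \<in> f -` {y}" using fiber by blast
      then have "?v x \<le> (SUP x\<in>f -` {y}. ?v x)" by (rule cSUP_upper[OF _ bdd])
      then show ?thesis using True fuzzy_union_nonneg[OF assms, of t Q x] by linarith
    next
      case False
      then obtain i x where "i \<in> I" "x \<in> Q i" "f x = y" "?w y = t i"
        using fuzzy_union_cases[OF assms, of t "\<lambda>i. fbar f (Q i)" y] by (auto simp: fbar_def)
      moreover have "?v x \<le> (SUP x\<in>f -` {y}. ?v x)" using \<open>f x = y\<close> by (intro cSUP_upper[OF _ bdd]) auto
      ultimately show ?thesis using fuzzy_union_ge[OF assms, of i x Q t] by linarith
    qed
    ultimately show ?thesis using fiber by (simp add: zadeh_def)
  qed
qed

lemma funpow_zadeh_fuzzy_union: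
  assumes "finite I"
  shows "(zadeh f ^^ n) (fuzzy_union I t Q) = fuzzy_union I t (\<lambda>i. (fbar f ^^ n) (Q i))"
  by (induction n) (simp_all add: zadeh_fuzzy_union[OF assms])

lemma fuzzy_union_Per:
  assumes "finite I" "\<And>i. i \<in> I \<Longrightarrow> Q i \<in> Per (fbar f) KX" "fuzzy_union I t Q \<in> FX"
  shows "fuzzy_union I t Q \<in> Per (zadeh f) FX"
proof -
  have "\<forall>i\<in>I. \<exists>p. 0 < p \<and> (fbar f ^^ p) (Q i) = Q i" using assms(2) by (simp add: Per_def)
  then obtain p where p: "\<And>i. i \<in> I \<Longrightarrow> 0 < p i \<and> (fbar f ^^ p i) (Q i) = Q i" by metis
  define N where "N = prod p I"
  have "0 < N" using p unfolding N_def by (simp add: prod_pos)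
  have periodic: "(fbar f ^^ N) (Q i) = Q i" if "i \<in> I" for i
  proof -
    have "N mod p i = 0" unfolding N_def using assms(1) that by (simp add: dvd_prodI)
    then show ?thesis using funpow_mod_eq[where f="fbar f" and n="p i" and x="Q i" and m=N] p[OF that] by simp
  qed
  have "{i\<in>I. y \<in> (fbar f ^^ N) (Q i)} = {i\<in>I. y \<in> Q i}" for y using periodic by auto
  then have "(zadeh f ^^ N) (fuzzy_union I t Q) = fuzzy_union I t Q"
    unfolding funpow_zadeh_fuzzy_union[OF assms(1)] by (simp add: fun_eq_iff fuzzy_union_def)
  then show ?thesis using assms(3) \<open>0 < N\<close> by (auto simp: Per_def)
qed

lemma FX_finite_cover_by_maximizers:
  assumes "u \<in> FX" "0 < e"
  obtains F z where "finite F" "\<And>x. x \<in> F \<Longrightarrow> dist x (z x) \<le> e"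
    "\<And>w. w \<in> cut u 0 \<Longrightarrow> \<exists>x\<in>F. dist x w < e \<and> u w \<le> u (z x)"
proof -
  let ?S = "cut u 0"
  have "compact ?S" using FX_compact_cut[OF assms(1)] by simp
  moreover have cover: "?S \<subseteq> (\<Union>x\<in>?S. ball x e)" using assms(2) by auto
  ultimately obtain F where F: "F \<subseteq> ?S" "finite F" "?S \<subseteq> (\<Union>x\<in>F. ball x e)"
    using compactE_image[OF _ _ cover] by (metis open_ball)
  have "\<exists>z. z \<in> ?S \<inter> cball x e \<and> (\<forall>w\<in>?S \<inter> cball x e. u w \<le> u z)" if "x \<in> F" for x
  proof -
    have "compact (?S \<inter> cball x e)" using \<open>compact ?S\<close> by (simp add: compact_Int_closed)
    moreover have "x \<in> ?S \<inter> cball x e" using that F(1) assms(2) by auto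
    ultimately show ?thesis
      using upper_semicont_attains_max[OF FX_upper_semicont[OF assms(1)]] by (metis empty_iff)
  qed
  then obtain z where z: "\<And>x. x \<in> F \<Longrightarrow> z x \<in> ?S \<inter> cball x e \<and> (\<forall>w\<in>?S \<inter> cball x e. u w \<le> u (z x))"
    by metis
  show ?thesis
  proof
    show "finite F" by fact
    show "dist x (z x) \<le> e" if "x \<in> F" for x using z[OF that] by simp
    show "\<exists>x\<in>F. dist x w < e \<and> u w \<le> u (z x)" if w: "w \<in> ?S" for w
    proof -
      obtain x where "x \<in> F" "dist x w < e" using F(3) w by auto
      then show ?thesis using z[of x] w by (intro bexI[of _ x]) auto
    qed
  qed
qed

lemma levelwise_close_fuzzy_union:
  assumes "finite F" "0 < e"
    and "\<And>x. x \<in> F \<Longrightarrow> dist x (z x) \<le> e"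
    and "\<And>w. w \<in> cut u 0 \<Longrightarrow> \<exists>x\<in>F. dist x w < e \<and> u w \<le> u (z x)"
    and "\<And>x. x \<in> F \<Longrightarrow> P x \<noteq> {}" "\<And>x y. x \<in> F \<Longrightarrow> y \<in> P x \<Longrightarrow> dist x y < e"
  shows "levelwise_close (3 * e) u (fuzzy_union F (u \<circ> z) P)"
  unfolding levelwise_close_def
proof (intro ballI conjI)
  let ?v = "fuzzy_union F (u \<circ> z) P"
  fix a :: real assume a: "a \<in> {0..1}"
  fix x' assume "x' \<in> cut u a"
  obtain w where w: "0 < u w" "a \<le> u w" "dist x' w < e"
    by (rule cut_approx_by_positive[of a x' u e]) (use a assms(2) \<open>x' \<in> cut u a\<close> in auto)
  then have "w \<in> cut u 0" by (intro in_cutI) auto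
  then obtain x where x: "x \<in> F" "dist x w < e" "u w \<le> u (z x)" using assms(4) by blast
  then obtain y where y: "y \<in> P x" using assms(5) by blast
  have "u (z x) \<le> ?v y" using fuzzy_union_ge[where t="u \<circ> z" and Q=P, OF assms(1) x(1) y] by simp
  then have "y \<in> cut ?v a" using w x(3) by (intro in_cutI) auto
  moreover have "dist x' y \<le> dist x' w + dist w x + dist x y"
    using dist_triangle[of x' y w] dist_triangle[of w y x] by linarith
  ultimately show "\<exists>y\<in>cut ?v a. dist x' y \<le> 3 * e"
    using w(3) x(2) assms(6)[OF x(1) y] by (intro bexI[of _ y]) (auto simp: dist_commute)
next
  let ?v = "fuzzy_union F (u \<circ> z) P"
  fix a :: real assume a: "a \<in> {0..1}"
  fix y assume "y \<in> cut ?v a"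
  obtain y' where y': "0 < ?v y'" "a \<le> ?v y'" "dist y y' < e"
    by (rule cut_approx_by_positive[of a y ?v e]) (use a assms(2) \<open>y \<in> cut ?v a\<close> in auto)
  then obtain x where x: "x \<in> F" "y' \<in> P x" "?v y' = u (z x)"
    using fuzzy_union_cases[OF assms(1), of "u \<circ> z" P y'] by auto
  then have "z x \<in> cut u a" using y' by (intro in_cutI) auto
  moreover have "dist (z x) y \<le> dist (z x) x + dist x y' + dist y' y"
    using dist_triangle[of "z x" y x] dist_triangle[of x y y'] by linarith
  ultimately show "\<exists>x'\<in>cut u a. dist x' y \<le> 3 * e"
    using assms(3)[OF x(1)] assms(6)[OF x(1,2)] y'(3)
    by (intro bexI[of _ "z x"]) (auto simp: dist_commute)
qed

lemma exists_Per_zadeh_levelwise_close: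
  assumes "dense_wrt dH KX (Per (fbar f) KX)" "u \<in> FX" "0 < e"
  shows "\<exists>v\<in>Per (zadeh f) FX. levelwise_close e u v"
proof -
  have e3: "0 < e / 3" using assms(3) by simp
  obtain F z where F: "finite F" "\<And>x. x \<in> F \<Longrightarrow> dist x (z x) \<le> e / 3"
      "\<And>w. w \<in> cut u 0 \<Longrightarrow> \<exists>x\<in>F. dist x w < e / 3 \<and> u w \<le> u (z x)"
    using FX_finite_cover_by_maximizers[OF assms(2) e3] by metis
  have "{x} \<in> KX" for x by (simp add: KX_def)
  then have "\<exists>P\<in>Per (fbar f) KX. dH {x} P < e / 3" for x
    using assms(1) e3 unfolding dense_wrt_def by blast
  then obtain P where P: "\<And>x. P x \<in> Per (fbar f) KX" "\<And>x. dH {x} (P x) < e / 3" by metis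
  have PK: "compact (P x)" "P x \<noteq> {}" for x using P(1) by (auto simp: Per_def KX_def)
  have near: "dist x y < e / 3" if "y \<in> P x" for x y
    using dist_le_dH_singleton[OF compact_imp_bounded[OF PK(1)] that, of x] P(2)[of x] by linarith
  obtain w where "w \<in> cut u 1" using FX_cut_nonempty[OF assms(2)] by blast
  then have "1 \<le> u w" "w \<in> cut u 0" using cut_subset_cut0[of 1 u] by (auto simp: cut_superlevel)
  then obtain x1 where "x1 \<in> F" "1 \<le> u (z x1)" using F(3) by fastforce
  obtain y1 where "y1 \<in> P x1" using PK(2) by blast
  define v where "v = fuzzy_union F (u \<circ> z) P"
  have "v \<in> FX"
    unfolding v_def using F(1) PK(1) FX_le_1[OF assms(2)] \<open>x1 \<in> F\<close> \<open>y1 \<in> P x1\<close> \<open>1 \<le> u (z x1)\<close>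
    by (intro fuzzy_union_FX) auto
  then have "v \<in> Per (zadeh f) FX" unfolding v_def using F(1) P(1) by (intro fuzzy_union_Per)
  moreover have "levelwise_close (3 * (e / 3)) u v"
    unfolding v_def using F PK(2) near e3 by (intro levelwise_close_fuzzy_union) auto
  ultimately show ?thesis by auto
qed

lemma dense_Per_zadeh_if_levelwise_bound:
  assumes "dense_wrt dH KX (Per (fbar f) KX)"
    and "\<And>u v c. u \<in> FX \<Longrightarrow> v \<in> FX \<Longrightarrow> 0 \<le> c \<Longrightarrow> levelwise_close c u v \<Longrightarrow> \<rho> u v \<le> c"
  shows "dense_wrt \<rho> FX (Per (zadeh f) FX)"
  unfolding dense_wrt_def
proof (intro conjI ballI allI impI)
  show "Per (zadeh f) FX \<subseteq> FX" by (auto simp: Per_def)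
  fix u :: "'a \<Rightarrow> real" and e :: real assume "u \<in> FX" "0 < e"
  then obtain v where "v \<in> Per (zadeh f) FX" "levelwise_close (e / 2) u v"
    using exists_Per_zadeh_levelwise_close[OF assms(1), of u "e / 2"] by auto
  moreover have "v \<in> FX" using calculation(1) by (simp add: Per_def)
  then have "\<rho> u v \<le> e / 2" using assms(2)[OF \<open>u \<in> FX\<close> _ _ calculation(2)] \<open>0 < e\<close> by simp
  ultimately show "\<exists>v\<in>Per (zadeh f) FX. \<rho> u v < e" using \<open>0 < e\<close> by (intro bexI[of _ v]) auto
qed

lemma dense_Per_fbar_if_cut_approx:
  assumes "continuous_on UNIV f" "dense_wrt \<rho> FX (Per (zadeh f) FX)" "0 < a" "a \<le> 1"
    and "\<And>K v c. K \<in> KX \<Longrightarrow> v \<in> FX \<Longrightarrow> c \<le> 1/4 \<Longrightarrow> \<rho> (indicator K) v < c \<Longrightarrow> dH K (cut v a) \<le> c"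
  shows "dense_wrt dH KX (Per (fbar f) KX)"
  unfolding dense_wrt_def
proof (intro conjI ballI allI impI)
  show "Per (fbar f) KX \<subseteq> KX" by (auto simp: Per_def)
  fix K :: "'a set" and e :: real assume "K \<in> KX" "0 < e"
  define c where "c = min (e / 2) (1/4)"
  have c: "0 < c" "c \<le> 1/4" "c < e" using \<open>0 < e\<close> by (auto simp: c_def)
  obtain v where v: "v \<in> Per (zadeh f) FX" "\<rho> (indicator K) v < c"
    using assms(2) indicator_FX[OF \<open>K \<in> KX\<close>] c(1) unfolding dense_wrt_def by blast
  then have "dH K (cut v a) \<le> c" using assms(5)[OF \<open>K \<in> KX\<close> _ c(2)] by (auto simp: Per_def)
  moreover have "cut v a \<in> Per (fbar f) KX" using cut_Per_zadeh[OF assms(1) v(1) assms(3,4)] .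
  ultimately show "\<exists>P\<in>Per (fbar f) KX. dH K P < e" using c(3) by force
qed

lemma dense_wrt_if_dominated:
  assumes "dense_wrt \<rho> S A" "\<And>u v. \<sigma> u v \<le> max 0 (\<rho> u v)"
  shows "dense_wrt \<sigma> S A"
  using assms unfolding dense_wrt_def by (meson max_less_iff_conj order_le_less_trans)

theorem lemma4p1:
  fixes f :: "'a::metric_space \<Rightarrow> 'a"
  assumes "continuous_on UNIV f"
  shows "(dense_wrt dH KX (Per (fbar f) KX) \<longleftrightarrow> dense_wrt d_inf FX (Per (zadeh f) FX))
       \<and> (dense_wrt d_inf FX (Per (zadeh f) FX) \<longleftrightarrow> dense_wrt d_0 FX (Per (zadeh f) FX))
       \<and> (dense_wrt d_0 FX (Per (zadeh f) FX) \<longleftrightarrow> dense_wrt d_S FX (Per (zadeh f) FX))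
       \<and> (dense_wrt d_S FX (Per (zadeh f) FX) \<longleftrightarrow> dense_wrt d_E FX (Per (zadeh f) FX))"
proof -
  let ?K = "dense_wrt dH KX (Per (fbar f) KX)"
  have "?K \<Longrightarrow> dense_wrt d_inf FX (Per (zadeh f) FX)"
    using d_inf_le_if_levelwise_close by (blast intro: dense_Per_zadeh_if_levelwise_bound)
  moreover have "?K \<Longrightarrow> dense_wrt d_S FX (Per (zadeh f) FX)"
    using d_S_le_if_levelwise_close by (blast intro: dense_Per_zadeh_if_levelwise_bound)
  moreover have "?K \<Longrightarrow> dense_wrt d_E FX (Per (zadeh f) FX)"
    using d_E_le_if_levelwise_close by (blast intro: dense_Per_zadeh_if_levelwise_bound)
  moreover have "dense_wrt d_inf FX (Per (zadeh f) FX) \<Longrightarrow> dense_wrt d_0 FX (Per (zadeh f) FX)"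
    by (erule dense_wrt_if_dominated[OF _ d_0_le_d_inf])
  moreover have "dense_wrt d_0 FX (Per (zadeh f) FX) \<Longrightarrow> ?K"
    using dH_cut1_le_d_0 by (intro dense_Per_fbar_if_cut_approx[OF assms, where a=1]) force+
  moreover have "dense_wrt d_S FX (Per (zadeh f) FX) \<Longrightarrow> ?K"
    using dH_cut_half_le_d_S by (intro dense_Per_fbar_if_cut_approx[OF assms, where a="1/2"]) auto
  moreover have "dense_wrt d_E FX (Per (zadeh f) FX) \<Longrightarrow> ?K"
    using dH_cut_half_le_d_E by (intro dense_Per_fbar_if_cut_approx[OF assms, where a="1/2"]) auto
  ultimately show ?thesis by blast
qed

end
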